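(* Let $n\in\mathbb N$ and let $A$ be a partition of $\{1,\dots,2n\}$. For $u=(u_0,u_1,\dots,u_{2n})\in(\mathbb R^d)^{2n+1}$ write $M_A(u):=M_A((u_l)_{l\in I_A})$. Then for all $j\in\{2,\dots,2n+1\}$ with $j-1\in I_A$, $$u_0+\sum_{l=1}^{j-1}[M_A(u)]_l=u_{j-1}+u_0+\sum_{l\in\{1,\dots,j-2\}\cap I_A}\sigma_{A,j-2}(l)\,u_l.$$
   Context: $J_A=\{\max a:a\in A\}$, $I_A=\{1,\dots,2n\}\setminus J_A$, and $a(l)$ denotes the block of $A$ containing $l$. For $w=(w_l)_{l\in I_A}\in(\mathbb R^d)^{I_A}$, $M_A(w)\in(\mathbb R^d)^{2n}$ is defined by $[M_A(w)]_j=w_j$ if $j\in I_A$ and $[M_A(w)]_j=-\sum_{l\in a(j)\setminus\{j\}}w_l$ if $j\in J_A$. For $j\in\{0,\dots,2n+1\}$, $\sigma_{A,j}:\{1,\dots,2n\}\to\{0,1\}$ is $\sigma_{A,j}(l)=1$ if $\max a(l)>j$ and $0$ otherwise. *)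

theory Defs
  imports "HOL-Analysis.Analysis" "HOL-Library.Disjoint_Sets"
begin

text \<open>A partition A of {1..2n} is a set of blocks (nat sets) with partition_on {1..2*n} A.\<close>

definition J_set :: "nat set set \<Rightarrow> nat set" where
  "J_set A = {Max a | a. a \<in> A}"

definition I_set :: "nat \<Rightarrow> nat set set \<Rightarrow> nat set" where
  "I_set n A = {1..2*n} - J_set A"

definition blk :: "nat set set \<Rightarrow> nat \<Rightarrow> nat set" where
  "blk A l = (THE a. a \<in> A \<and> l \<in> a)"

text \<open>M_A(w): only the values w l for l in I_A are used.\<close>
definition M_map :: "nat \<Rightarrow> nat set set \<Rightarrow> (nat \<Rightarrow> 'v::real_vector) \<Rightarrow> nat \<Rightarrow> 'v" where
  "M_map n A w j =
     (if j \<in> I_set n A then w j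
      else if j \<in> J_set A then - (\<Sum>l \<in> blk A j - {j}. w l)
      else 0)"

definition sigma :: "nat set set \<Rightarrow> nat \<Rightarrow> nat \<Rightarrow> nat" where
  "sigma A j l = (if Max (blk A l) > j then 1 else 0)"

end

theory Submission
  imports Defs
begin

text \<open>Grouping the terms of \<open>\<Sum>\<^sub>l [M\<^sub>A(u)]\<^sub>l\<close> by blocks: a block \<open>a\<close> contributes its
  non-maximal entries \<open>u\<^sub>l\<close> (\<open>l \<in> I\<^sub>A\<close>) and, at position \<open>max a\<close>, their negated sum. Hence a
  prefix sum over \<open>{1..m}\<close> keeps \<open>u\<^sub>l\<close> exactly when \<open>l \<le> m < max a(l)\<close>, i.e. it equals
  \<open>\<Sum>\<^bsub>l \<in> {1..m} \<inter> I\<^sub>A\<^esub> \<sigma>\<^sub>A\<^sub>,\<^sub>m(l) u\<^sub>l\<close>. The claim is the case \<open>m = j - 2\<close> plus the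
  term \<open>[M\<^sub>A(u)]\<^sub>j\<^sub>-\<^sub>1 = u\<^sub>j\<^sub>-\<^sub>1\<close>.\<close>

lemma blk_eqI:
  assumes "partition_on X A" and "a \<in> A" and "l \<in> a"
  shows "blk A l = a"
  unfolding blk_def
proof (rule the_equality)
  show "\<And>b. b \<in> A \<and> l \<in> b \<Longrightarrow> b = a"
    using assms partition_onD2 disjointD by blast
qed (use assms in blast)

lemma blk_in_partition:
  assumes "partition_on X A" and "l \<in> X"
  shows "blk A l \<in> A" and "l \<in> blk A l"
proof -
  obtain a where "a \<in> A" "l \<in> a"
    using assms partition_onD1 by blast
  then show "blk A l \<in> A" "l \<in> blk A l"
    using blk_eqI[OF assms(1)] by auto
qed

lemma finite_nonempty_part:
  assumes "partition_on X A" and "finite X" and "a \<in> A"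
  shows "finite a" and "a \<noteq> {}" and "a \<subseteq> X"
proof -
  show "a \<subseteq> X"
    using partition_onD1[OF assms(1)] assms(3) by blast
  then show "finite a"
    using assms(2) by (rule finite_subset)
  show "a \<noteq> {}"
    using partition_onD3[OF assms(1)] assms(3) by auto
qed

lemma Max_blk_in_blk:
  assumes "partition_on X A" and "finite X" and "l \<in> X"
  shows "Max (blk A l) \<in> blk A l" and "l \<le> Max (blk A l)"
proof -
  have "finite (blk A l)" "blk A l \<noteq> {}"
    using finite_nonempty_part[OF assms(1,2) blk_in_partition(1)[OF assms(1,3)]] by simp_all
  then show "Max (blk A l) \<in> blk A l" "l \<le> Max (blk A l)"
    using blk_in_partition(2)[OF assms(1,3)] by simp_all
qed

lemma blk_Max_blk:
  assumes "partition_on X A" and "finite X" and "l \<in> X"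
  shows "blk A (Max (blk A l)) = blk A l"
  using blk_eqI[OF assms(1)] blk_in_partition[OF assms(1,3)] Max_blk_in_blk[OF assms] by blast

lemma J_set_iff:
  assumes "partition_on X A" and "finite X"
  shows "x \<in> J_set A \<longleftrightarrow> x \<in> X \<and> Max (blk A x) = x"
proof
  assume "x \<in> J_set A"
  then obtain a where a: "a \<in> A" "x = Max a"
    unfolding J_set_def by blast
  then have "x \<in> a"
    using finite_nonempty_part[OF assms a(1)] by simp
  then have "x \<in> X" and "blk A x = a"
    using finite_nonempty_part(3)[OF assms a(1)] blk_eqI[OF assms(1) a(1)] by auto
  then show "x \<in> X \<and> Max (blk A x) = x"
    using a(2) by simp
next
  assume "x \<in> X \<and> Max (blk A x) = x"
  then show "x \<in> J_set A"
    unfolding J_set_def using blk_in_partition[OF assms(1)] by force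
qed

lemma Max_blk_in_J_set:
  assumes "partition_on X A" and "finite X" and "l \<in> X"
  shows "Max (blk A l) \<in> J_set A"
proof -
  have "Max (blk A l) \<in> X"
    using Max_blk_in_blk(1)[OF assms]
      finite_nonempty_part(3)[OF assms(1,2) blk_in_partition(1)[OF assms(1,3)]] by blast
  then show ?thesis
    using J_set_iff[OF assms(1,2)] blk_Max_blk[OF assms] by simp
qed

lemma blk_minus_Max:
  assumes P: "partition_on {1..2*n} A" and x: "x \<in> J_set A"
  shows "blk A x - {x} = {l \<in> I_set n A. Max (blk A l) = x}"
proof -
  have xX: "x \<in> {1..2*n}" and xMax: "Max (blk A x) = x"
    using J_set_iff[OF P] x by auto
  have "l \<in> {l \<in> I_set n A. Max (blk A l) = x}" if l: "l \<in> blk A x - {x}" for l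
  proof -
    have lX: "l \<in> {1..2*n}"
      using l finite_nonempty_part[OF P _ blk_in_partition(1)[OF P xX]] by auto
    have "blk A l = blk A x"
      using l blk_eqI[OF P blk_in_partition(1)[OF P xX]] by simp
    then show ?thesis
      using l lX xMax J_set_iff[OF P] unfolding I_set_def by auto
  qed
  moreover have "l \<in> blk A x - {x}" if l: "l \<in> {l \<in> I_set n A. Max (blk A l) = x}" for l
  proof -
    have lX: "l \<in> {1..2*n}" and "l \<noteq> x"
      using l x unfolding I_set_def by auto
    then show ?thesis
      using l blk_Max_blk[OF P _ lX] blk_in_partition(2)[OF P lX] by auto
  qed
  ultimately show ?thesis
    by blast
qed

lemma sum_M_map_prefix:
  fixes w :: "nat \<Rightarrow> 'v::real_vector"
  assumes P: "partition_on {1..2*n} A"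
  shows "(\<Sum>l = 1..m. M_map n A w l)
       = (\<Sum>l \<in> {1..m} \<inter> I_set n A. real (sigma A m l) *\<^sub>R w l)"
proof -
  let ?I = "I_set n A" and ?J = "J_set A" and ?S = "{1..m}"
  let ?top = "\<lambda>l. Max (blk A l)"
  have fin: "finite ?I" "finite ?J"
    unfolding I_set_def using J_set_iff[OF P] by (auto intro: finite_subset)
  have IJ: "?I \<inter> ?J = {}"
    unfolding I_set_def by blast
  have top_in_J: "?top l \<in> ?J" and le_top: "l \<le> ?top l" if "l \<in> ?I" for l
    using that Max_blk_in_J_set[OF P] Max_blk_in_blk(2)[OF P] unfolding I_set_def by auto
  have "(\<Sum>l \<in> ?S. M_map n A w l)
      = (\<Sum>l \<in> ?S. (if l \<in> ?I then w l else 0) - (if l \<in> ?J then \<Sum>k \<in> blk A l - {l}. w k else 0))"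
    using IJ by (intro sum.cong) (auto simp: M_map_def)
  also have "\<dots> = (\<Sum>l \<in> ?S \<inter> ?I. w l) - (\<Sum>x \<in> ?S \<inter> ?J. \<Sum>k \<in> blk A x - {x}. w k)"
    by (simp add: sum_subtractf sum.inter_restrict)
  also have "(\<Sum>x \<in> ?S \<inter> ?J. \<Sum>k \<in> blk A x - {x}. w k)
      = (\<Sum>x \<in> ?S \<inter> ?J. \<Sum>k \<in> {l \<in> {l \<in> ?I. ?top l \<in> ?S}. ?top l = x}. w k)"
    using blk_minus_Max[OF P] by (intro sum.cong) auto
  also have "\<dots> = (\<Sum>l \<in> {l \<in> ?I. ?top l \<in> ?S}. w l)"
    using fin top_in_J by (intro sum.group) auto
  also have "{l \<in> ?I. ?top l \<in> ?S} = {l \<in> ?S \<inter> ?I. ?top l \<le> m}"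
    using le_top unfolding I_set_def by fastforce
  also have "(\<Sum>l \<in> {l \<in> ?S \<inter> ?I. ?top l \<le> m}. w l)
      = (\<Sum>l \<in> ?S \<inter> ?I. if ?top l \<le> m then w l else 0)"
    by (rule sum.inter_filter) simp
  also have "(\<Sum>l \<in> ?S \<inter> ?I. w l) - (\<Sum>l \<in> ?S \<inter> ?I. if ?top l \<le> m then w l else 0)
      = (\<Sum>l \<in> ?S \<inter> ?I. real (sigma A m l) *\<^sub>R w l)"
    unfolding sigma_def sum_subtractf[symmetric] by (intro sum.cong) auto
  finally show ?thesis .
qed

theorem lemma10:
  fixes n :: nat and A :: "nat set set" and u :: "nat \<Rightarrow> real ^ 'd" and j :: nat
  assumes "partition_on {1..2*n} A"
    and "j \<in> {2..2*n+1}" and "j - 1 \<in> I_set n A"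
  shows "u 0 + (\<Sum>l = 1..j-1. M_map n A u l)
       = u (j-1) + u 0 + (\<Sum>l \<in> {1..j-2} \<inter> I_set n A. real (sigma A (j-2) l) *\<^sub>R u l)"
proof -
  have "{1..j-1} = insert (j-1) {1..j-2}" and "j - 1 \<notin> {1..j-2}"
    using assms(2) by auto
  then have "(\<Sum>l = 1..j-1. M_map n A u l) = M_map n A u (j-1) + (\<Sum>l = 1..j-2. M_map n A u l)"
    by simp
  also have "M_map n A u (j-1) = u (j-1)"
    using assms(3) by (simp add: M_map_def)
  finally show ?thesis
    using sum_M_map_prefix[OF assms(1)] by (simp add: algebra_simps)
qed

end
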